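(* Let $\ell$ be a positive integer and $n$ an integer such that $a:=n/\ell\in\mathbb Z$ and $n\ell+\ell^2>0$. For $u,v\in\mathbb C$, $\tau\in\mathbb H$, $n'\in\mathbb R$ and $\ell'\in\mathbb Z$ define $$\chi_{\mathsf A^{n,\ell}_{n',\ell'}}(u,v;\tau)=-i\,\frac{\theta_1(u;\tau)}{\eta(\tau)^3}\sum_{m\in\mathbb Z}\frac{(-1)^{k}e^{2\pi i v k}\,e^{2\pi i u(ak+n'+\frac12)}\,e^{\pi i\tau k(k(2a+1)+2n'+1)}}{1-e^{2\pi i(u+k\tau)}},\qquad k=m\ell+\ell',$$ for $u$ such that no denominator vanishes. Then, writing $y=e^{2\pi i v}$, $z=e^{2\pi i u}$, $$\chi_{\mathsf A^{n,\ell}_{n',\ell'}}(u+1,v;\tau)=e^{2\pi i(a\ell'+n')}\chi_{\mathsf A^{n,\ell}_{n',\ell'}}(u,v;\tau),\qquad \chi_{\mathsf A^{n,\ell}_{n',\ell'}}(u+\tau,v;\tau)=y^{-1}\chi_{\mathsf A^{n,\ell}_{n'-a-1,\ell'+1}}(u,v;\tau),$$ $$\chi_{\mathsf A^{n,\ell}_{n',\ell'}}(u,v+1;\tau)=\chi_{\mathsf A^{n,\ell}_{n',\ell'}}(u,v;\tau),\qquad \chi_{\mathsf A^{n,\ell}_{n',\ell'}}(u,v+\tau;\tau)=z^{-1}\chi_{\mathsf A^{n,\ell}_{n'+1,\ell'}}(u,v;\tau),$$ and more generally, for every $\alpha\in\mathbb R$, $$\chi_{\mathsf A^{n,\ell}_{n',\ell'}}(u,v+\alpha\tau;\tau)=e^{-2\pi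 i\alpha u}\,\chi_{\mathsf A^{n,\ell}_{n'+\alpha,\ell'}}(u,v;\tau).$$
   Context: $\theta_1(u;\tau)=-i\sum_{n\in\mathbb Z}(-1)^n e^{\pi i(n+\frac12)^2\tau+2\pi i u(n+\frac12)}$ and $\eta(\tau)=e^{\pi i\tau/12}\prod_{j\ge1}(1-e^{2\pi i j\tau})$. The function $\chi_{\mathsf A^{n,\ell}_{n',\ell'}}$ is the character of the atypical module $\mathsf A^{n,\ell}_{n',\ell'}$ of a W-superalgebra extending $\widehat{\mathfrak{gl}}(1|1)$; here it is taken as defined by the displayed formula. *)

theory Defs
  imports "HOL-Analysis.Analysis"
begin

definition theta1 :: "complex \<Rightarrow> complex \<Rightarrow> complex" where
  "theta1 u \<tau> = - \<i> * (\<Sum>\<^sub>\<infinity>n::int. (-1) powi n *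
      exp (pi * \<i> * (of_int n + 1/2)^2 * \<tau> + 2 * pi * \<i> * u * (of_int n + 1/2)))"

definition eta :: "complex \<Rightarrow> complex" where
  "eta \<tau> = exp (pi * \<i> * \<tau> / 12) * (\<Prod>j. (1 - exp (2 * pi * \<i> * of_nat (Suc j) * \<tau>)))"

text \<open>Character of the atypical module A^{n,l}_{n',l'}; here a = n div l (assumed exact).\<close>
definition chiA :: "int \<Rightarrow> int \<Rightarrow> real \<Rightarrow> int \<Rightarrow> complex \<Rightarrow> complex \<Rightarrow> complex \<Rightarrow> complex" where
  "chiA n l n' l' u v \<tau> =
     (let a = n div l in
      - \<i> * theta1 u \<tau> / eta \<tau> ^ 3 *
      (\<Sum>\<^sub>\<infinity>m::int. let k = m * l + l' in
         (-1) powi k * exp (2 * pi * \<i> * v * of_int k)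
         * exp (2 * pi * \<i> * u * (of_int a * of_int k + of_real n' + 1/2))
         * exp (pi * \<i> * \<tau> * of_int k * (of_int k * (2 * of_int a + 1) + 2 * of_real n' + 1))
         / (1 - exp (2 * pi * \<i> * (u + of_int k * \<tau>)))))"

definition admissible :: "int \<Rightarrow> int \<Rightarrow> complex \<Rightarrow> complex \<Rightarrow> bool" where
  "admissible l l' u \<tau> \<longleftrightarrow>
     (\<forall>m::int. 1 - exp (2 * pi * \<i> * (u + of_int (m * l + l') * \<tau>)) \<noteq> 0)"

end

theory Submission imports Defs begin

text \<open>Every identity holds term by term in the series defining \<open>theta1\<close> and \<open>chiA\<close>:
  a shift of \<open>u\<close> or \<open>v\<close> multiplies each summand by a common factor, possibly after
  shifting the summation index. The shift \<open>u \<mapsto> u + \<tau>\<close> sends the index \<open>k = m l + l'\<close>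
  of the character to \<open>k + 1 = m l + (l' + 1)\<close> and changes \<open>n'\<close> to \<open>n' - a - 1\<close>, while
  the quasi-periodicity of \<open>theta1\<close> absorbs the remaining factor up to \<open>y\<^sup>-\<^sup>1\<close>.
  Pulling out constant factors and reindexing by a bijection are valid for \<open>infsum\<close>
  unconditionally, so no convergence argument is needed, and neither admissibility
  nor \<open>l dvd n\<close> enters the proof.\<close>

lemma infsum_cong_cmult_right:
  fixes f g :: "'a \<Rightarrow> 'b :: {topological_semigroup_mult, division_ring, t2_space}"
  assumes "\<And>x. f x = c * g x"
  shows "infsum f A = c * infsum g A"
proof -
  have "f = (\<lambda>x. c * g x)" using assms by auto
  then show ?thesis by (simp add: infsum_cmult_right')
qed

lemma exp_2pi_i_Ints:
  assumes "x \<in> \<int>"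
  shows "exp (2 * of_real pi * \<i> * x) = 1"
proof -
  obtain j where "x = of_int j" using assms by (auto elim: Ints_cases)
  then show ?thesis using exp_integer_2pi[of "of_int j"] by (simp add: mult_ac)
qed

lemma minus_one_powi_plus_1: "(-1 :: complex) powi (k + 1) = - ((-1) powi k)"
  by (simp add: power_int_add)

lemma theta1_plus_1: "theta1 (u + 1) \<tau> = - theta1 u \<tau>"
proof -
  have "(-1) powi n * exp (pi * \<i> * (of_int n + 1/2)^2 * \<tau> + 2 * pi * \<i> * (u + 1) * (of_int n + 1/2))
      = - ((-1) powi n * exp (pi * \<i> * (of_int n + 1/2)^2 * \<tau> + 2 * pi * \<i> * u * (of_int n + 1/2)))"
    for n :: int
  proof -
    have "pi * \<i> * (of_int n + 1/2)^2 * \<tau> + 2 * pi * \<i> * (u + 1) * (of_int n + 1/2)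
      = (pi * \<i> * (of_int n + 1/2)^2 * \<tau> + 2 * pi * \<i> * u * (of_int n + 1/2))
        + 2 * pi * \<i> * of_int n + pi * \<i>"
      by (simp add: algebra_simps)
    then show ?thesis by (simp add: exp_add exp_2pi_i_Ints)
  qed
  then show ?thesis
    unfolding theta1_def by (subst infsum_cong_cmult_right[of _ "-1"]) auto
qed

lemma theta1_plus_tau:
  "theta1 (u + \<tau>) \<tau> = - exp (- pi * \<i> * \<tau> - 2 * pi * \<i> * u) * theta1 u \<tau>"
proof -
  define g where "g n = (-1) powi n * exp (pi * \<i> * (of_int n + 1/2)^2 * \<tau> + 2 * pi * \<i> * u * (of_int n + 1/2))"
    for n :: int
  have "(-1) powi n * exp (pi * \<i> * (of_int n + 1/2)^2 * \<tau> + 2 * pi * \<i> * (u + \<tau>) * (of_int n + 1/2))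
      = - exp (- pi * \<i> * \<tau> - 2 * pi * \<i> * u) * g (n + 1)" for n :: int
  proof -
    have "pi * \<i> * (of_int n + 1/2)^2 * \<tau> + 2 * pi * \<i> * (u + \<tau>) * (of_int n + 1/2)
      = (- pi * \<i> * \<tau> - 2 * pi * \<i> * u)
        + (pi * \<i> * (of_int (n + 1) + 1/2)^2 * \<tau> + 2 * pi * \<i> * u * (of_int (n + 1) + 1/2))"
      by (simp add: algebra_simps power2_eq_square)
    then show ?thesis by (simp add: g_def exp_add minus_one_powi_plus_1)
  qed
  then have "theta1 (u + \<tau>) \<tau> = - \<i> * (- exp (- pi * \<i> * \<tau> - 2 * pi * \<i> * u) * infsum (\<lambda>n. g (n + 1)) UNIV)"
    unfolding theta1_def
    by (subst infsum_cong_cmult_right[of _ "- exp (- pi * \<i> * \<tau> - 2 * pi * \<i> * u)"]) auto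
  moreover have "infsum (\<lambda>n. g (n + 1)) UNIV = infsum g UNIV"
    by (rule infsum_reindex_bij_betw) (simp add: bij_betw_def inj_on_def surj_plus_right)
  ultimately show ?thesis unfolding theta1_def g_def by simp
qed

definition chiA_summand :: "int \<Rightarrow> real \<Rightarrow> int \<Rightarrow> complex \<Rightarrow> complex \<Rightarrow> complex \<Rightarrow> complex" where
  "chiA_summand a n' k u v \<tau> = (-1) powi k * exp (2 * pi * \<i> * v * of_int k
     + 2 * pi * \<i> * u * (of_int a * of_int k + of_real n' + 1/2)
     + pi * \<i> * \<tau> * of_int k * (of_int k * (2 * of_int a + 1) + 2 * of_real n' + 1))
     / (1 - exp (2 * pi * \<i> * (u + of_int k * \<tau>)))"

lemma chiA_eq_infsum_summand:
  "chiA n l n' l' u v \<tau> =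
     - \<i> * theta1 u \<tau> / eta \<tau> ^ 3 * (\<Sum>\<^sub>\<infinity>m. chiA_summand (n div l) n' (m * l + l') u v \<tau>)"
  unfolding chiA_def chiA_summand_def Let_def by (simp add: exp_add mult.assoc)

lemma chiA_summand_u_plus_1:
  "chiA_summand a n' (m * l + l') (u + 1) v \<tau>
     = - exp (2 * pi * \<i> * (of_int (a * l') + of_real n')) * chiA_summand a n' (m * l + l') u v \<tau>"
proof -
  let ?k = "m * l + l'"
  define E where "E = 2 * pi * \<i> * v * of_int ?k
     + 2 * pi * \<i> * u * (of_int a * of_int ?k + of_real n' + 1/2)
     + pi * \<i> * \<tau> * of_int ?k * (of_int ?k * (2 * of_int a + 1) + 2 * of_real n' + 1)"
  have "2 * pi * \<i> * v * of_int ?k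
     + 2 * pi * \<i> * (u + 1) * (of_int a * of_int ?k + of_real n' + 1/2)
     + pi * \<i> * \<tau> * of_int ?k * (of_int ?k * (2 * of_int a + 1) + 2 * of_real n' + 1)
     = E + 2 * pi * \<i> * (of_int (a * l') + of_real n') + 2 * pi * \<i> * of_int (a * m * l) + pi * \<i>"
    unfolding E_def by (simp add: algebra_simps)
  moreover have "2 * pi * \<i> * (u + 1 + of_int ?k * \<tau>) = 2 * pi * \<i> * (u + of_int ?k * \<tau>) + 2 * pi * \<i>"
    by (simp add: algebra_simps)
  ultimately show ?thesis
    unfolding chiA_summand_def E_def[symmetric] by (simp add: exp_add exp_2pi_i_Ints)
qed

lemma chiA_summand_u_plus_tau:
  "chiA_summand a n' k (u + \<tau>) v \<tau>
     = - exp (pi * \<i> * \<tau> + 2 * pi * \<i> * u - 2 * pi * \<i> * v) * chiA_summand a (n' - of_int a - 1) (k + 1) u v \<tau>"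
proof -
  have "exp (2 * pi * \<i> * v * of_int k
     + 2 * pi * \<i> * (u + \<tau>) * (of_int a * of_int k + of_real n' + 1/2)
     + pi * \<i> * \<tau> * of_int k * (of_int k * (2 * of_int a + 1) + 2 * of_real n' + 1))
     = exp (pi * \<i> * \<tau> + 2 * pi * \<i> * u - 2 * pi * \<i> * v) * exp (2 * pi * \<i> * v * of_int (k + 1)
     + 2 * pi * \<i> * u * (of_int a * of_int (k + 1) + of_real (n' - of_int a - 1) + 1/2)
     + pi * \<i> * \<tau> * of_int (k + 1) * (of_int (k + 1) * (2 * of_int a + 1) + 2 * of_real (n' - of_int a - 1) + 1))"
    unfolding exp_add[symmetric] by (rule arg_cong[where f = exp]) (simp add: algebra_simps)
  moreover have "u + \<tau> + of_int k * \<tau> = u + of_int (k + 1) * \<tau>"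
    by (simp add: algebra_simps)
  ultimately show ?thesis
    unfolding chiA_summand_def minus_one_powi_plus_1 by (simp only:) simp
qed

lemma chiA_summand_v_plus_1: "chiA_summand a n' k u (v + 1) \<tau> = chiA_summand a n' k u v \<tau>"
proof -
  have "2 * pi * \<i> * (v + 1) * of_int k = 2 * pi * \<i> * v * of_int k + 2 * pi * \<i> * of_int k"
    by (simp add: algebra_simps)
  then show ?thesis
    unfolding chiA_summand_def by (simp add: exp_add exp_2pi_i_Ints)
qed

lemma chiA_summand_v_plus_real_tau:
  "chiA_summand a n' k u (v + of_real \<alpha> * \<tau>) \<tau>
     = exp (- 2 * pi * \<i> * of_real \<alpha> * u) * chiA_summand a (n' + \<alpha>) k u v \<tau>"
proof -
  have "exp (2 * pi * \<i> * (v + of_real \<alpha> * \<tau>) * of_int k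
     + 2 * pi * \<i> * u * (of_int a * of_int k + of_real n' + 1/2)
     + pi * \<i> * \<tau> * of_int k * (of_int k * (2 * of_int a + 1) + 2 * of_real n' + 1))
     = exp (- 2 * pi * \<i> * of_real \<alpha> * u) * exp (2 * pi * \<i> * v * of_int k
     + 2 * pi * \<i> * u * (of_int a * of_int k + of_real (n' + \<alpha>) + 1/2)
     + pi * \<i> * \<tau> * of_int k * (of_int k * (2 * of_int a + 1) + 2 * of_real (n' + \<alpha>) + 1))"
    unfolding exp_add[symmetric] by (rule arg_cong[where f = exp]) (simp add: algebra_simps)
  then show ?thesis unfolding chiA_summand_def by simp
qed

lemma chiA_u_plus_1:
  "chiA n l n' l' (u + 1) v \<tau> = exp (2 * pi * \<i> * (of_int (n div l * l') + of_real n')) * chiA n l n' l' u v \<tau>"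
  unfolding chiA_eq_infsum_summand theta1_plus_1
  by (subst infsum_cong_cmult_right[OF chiA_summand_u_plus_1]) simp

lemma chiA_u_plus_tau:
  "chiA n l n' l' (u + \<tau>) v \<tau> = inverse (exp (2 * pi * \<i> * v)) * chiA n l (n' - of_int (n div l) - 1) (l' + 1) u v \<tau>"
proof -
  have summand: "chiA_summand (n div l) n' (m * l + l') (u + \<tau>) v \<tau>
      = - exp (pi * \<i> * \<tau> + 2 * pi * \<i> * u - 2 * pi * \<i> * v)
        * chiA_summand (n div l) (n' - of_int (n div l) - 1) (m * l + (l' + 1)) u v \<tau>" for m
    using chiA_summand_u_plus_tau by (simp add: add.assoc)
  have factor: "exp (- pi * \<i> * \<tau> - 2 * pi * \<i> * u) * exp (pi * \<i> * \<tau> + 2 * pi * \<i> * u - 2 * pi * \<i> * v)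
      = inverse (exp (2 * pi * \<i> * v))"
    unfolding exp_add[symmetric] exp_minus[symmetric] by (rule arg_cong[where f = exp]) (simp add: algebra_simps)
  show ?thesis
    unfolding chiA_eq_infsum_summand theta1_plus_tau
    by (subst infsum_cong_cmult_right[OF summand], simp only: factor[symmetric]) (simp add: field_simps)
qed

lemma chiA_v_plus_1: "chiA n l n' l' u (v + 1) \<tau> = chiA n l n' l' u v \<tau>"
  unfolding chiA_eq_infsum_summand chiA_summand_v_plus_1 ..

lemma chiA_v_plus_real_tau:
  "chiA n l n' l' u (v + of_real \<alpha> * \<tau>) \<tau> = exp (- 2 * pi * \<i> * of_real \<alpha> * u) * chiA n l (n' + \<alpha>) l' u v \<tau>"
  unfolding chiA_eq_infsum_summand
  by (subst infsum_cong_cmult_right[OF chiA_summand_v_plus_real_tau]) simp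

theorem mainTheorem3:
  fixes l n l' :: int and n' \<alpha> :: real and u v \<tau> :: complex
  assumes "l > 0" and "l dvd n" and "n * l + l^2 > 0" and "Im \<tau> > 0"
  defines "a \<equiv> n div l"
  shows
   "(admissible l l' u \<tau> \<longrightarrow>
       chiA n l n' l' (u + 1) v \<tau> = exp (2 * pi * \<i> * (of_int (a * l') + of_real n')) * chiA n l n' l' u v \<tau>)
  \<and> (admissible l l' (u + \<tau>) \<tau> \<longrightarrow>
       chiA n l n' l' (u + \<tau>) v \<tau> = inverse (exp (2 * pi * \<i> * v)) * chiA n l (n' - of_int a - 1) (l' + 1) u v \<tau>)
  \<and> (admissible l l' u \<tau> \<longrightarrow>
       chiA n l n' l' u (v + 1) \<tau> = chiA n l n' l' u v \<tau>)
  \<and> (admissible l l' u \<tau> \<longrightarrow>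
       chiA n l n' l' u (v + \<tau>) \<tau> = inverse (exp (2 * pi * \<i> * u)) * chiA n l (n' + 1) l' u v \<tau>)
  \<and> (admissible l l' u \<tau> \<longrightarrow>
       chiA n l n' l' u (v + of_real \<alpha> * \<tau>) \<tau> = exp (- 2 * pi * \<i> * of_real \<alpha> * u) * chiA n l (n' + \<alpha>) l' u v \<tau>)"
proof -
  have "chiA n l n' l' u (v + \<tau>) \<tau> = inverse (exp (2 * pi * \<i> * u)) * chiA n l (n' + 1) l' u v \<tau>"
    using chiA_v_plus_real_tau[of n l n' l' u v 1 \<tau>] by (simp add: exp_minus[symmetric])
  then show ?thesis
    unfolding a_def by (intro conjI impI chiA_u_plus_1 chiA_u_plus_tau chiA_v_plus_1 chiA_v_plus_real_tau)
qed

end
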